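(* Let $\mathcal P$ be a dioperad and let $(V,\rho)$ be a finite-dimensional representation of $\mathcal P$, i.e. a morphism of dioperads $\rho:\mathcal P\to \mathit{End}_V$. Then $\rho$ induces a representation $\bar\rho$ of the 2-colored operad $\Psi(\mathcal P)$ on the pair $(V,V^* )$, where $V$ is assigned to the straight color and $V^*$ to the dotted color; for $\gamma\in\mathcal P(m,n)$ the operations $\bar\rho(\Psi^{|}(\gamma))\in\mathrm{Hom}(V^{\otimes m}\otimes (V^* )^{\otimes n-1},V)$ and $\bar\rho(\Psi^{\mathrm{dot}}(\gamma))\in \mathrm{Hom}(V^{\otimes m-1}\otimes (V^* )^{\otimes n},V^* )$ correspond to $\rho(\gamma)\in\mathrm{Hom}(V^{\otimes m},V^{\otimes n})$ under the canonical isomorphisms $\mathrm{Hom}(V^{\otimes m},V^{\otimes n})\cong \mathrm{Hom}(V^{\otimes m}\otimes (V^* )^{\otimes n-1},V)\cong \mathrm{Hom}(V^{\otimes m-1}\otimes (V^* )^{\otimes n},V^* )$.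
   Context: A dioperad $\mathcal P$ consists of spaces $\mathcal P(m,n)$ ($m$ inputs, $n$ outputs) with right $S_m$- and left $S_n$-actions and associative, equivariant infinitesimal compositions ${}_i\circ_j:\mathcal P(m,n)\otimes\mathcal P(m',n')\to\mathcal P(m+m'-1,n+n'-1)$ plugging the $i$-th output of the first into the $j$-th input of the second (iterated compositions are along directed trees). The endomorphism dioperad is $\mathit{End}_V(m,n)=\mathrm{Hom}(V^{\otimes m},V^{\otimes n})$ with the natural compositions. $\Psi(\mathcal P)$ is the 2-colored operad (colors "straight" and "dotted") obtained by rerooting: choosing an input or output leg of a dioperadic tree as root, reorienting all edges towards it, and coloring an edge straight if the new orientation agrees with the original one and dotted otherwise. Thus $\Psi(\mathcal P)^{|}(m,n-1)=\mathcal P(m,n)$ (straight output, $m$ straight and $n-1$ dotted inputs; for $\gamma\in\mathcal P(m,n)$ the corresponding element is denoted $\Psi^{|}(\gamma)$) and $\Psi(\mathcal P)^{\mathrm{dot}}(m-1,n)=\mathcal P(m,n)$ (dotted output, $m-1$ straight and $n$ dotted inputs; element denoted $\Psi^{\mathrm{dot}}(\gamma)$), with compositions induced by those of $\mathcal P$. *)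

theory Defs
  imports Main "HOL-Library.Function_Algebras" "HOL-Combinatorics.Permutations"
begin

text \<open>
  Legs are numbered from 0.  Permutations of n legs are functions sigma with
  sigma permutes {..<n}.

  Composition convention in a dioperad: for a in P(m,n), b in P(m',n'),
  i < n, j < m', the element dcomp (m,n) (m',n') i j a b in P(m+m'-1,n+n'-1)
  plugs output i of a into input j of b.  Its inputs are
  (inputs of b before j) @ (inputs of a) @ (inputs of b after j),
  its outputs are (outputs of a before i) @ (outputs of b) @ (outputs of a after i).

  Right action a.sigma on inputs: new input slot k of a.sigma is old slot sigma k of a.
  Left action tau.a on outputs: old output slot p of a becomes new slot tau p.
\<close>

record ('a, 'k) dioperad =
  dcar   :: "nat \<Rightarrow> nat \<Rightarrow> 'a set"
  dsmult :: "'k \<Rightarrow> 'a \<Rightarrow> 'a"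
  dract  :: "nat \<Rightarrow> nat \<Rightarrow> 'a \<Rightarrow> (nat \<Rightarrow> nat) \<Rightarrow> 'a"
  dlact  :: "nat \<Rightarrow> nat \<Rightarrow> (nat \<Rightarrow> nat) \<Rightarrow> 'a \<Rightarrow> 'a"
  dcomp  :: "nat \<times> nat \<Rightarrow> nat \<times> nat \<Rightarrow> nat \<Rightarrow> nat \<Rightarrow> 'a \<Rightarrow> 'a \<Rightarrow> 'a"

text \<open>Leg bookkeeping: labels (s,p) = leg p of the s-th element of a composite.\<close>

definition lab :: "nat \<Rightarrow> nat \<Rightarrow> (nat \<times> nat) list" where
  "lab s k = map (\<lambda>p. (s, p)) [0..<k]"

definition relab :: "nat \<Rightarrow> (nat \<Rightarrow> nat) \<Rightarrow> nat \<Rightarrow> (nat \<times> nat) list" where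
  "relab s f k = map (\<lambda>p. (s, f p)) [0..<k]"

definition ins_at :: "'x list \<Rightarrow> nat \<Rightarrow> 'x list \<Rightarrow> 'x list" where
  "ins_at ys j xs = take j ys @ xs @ drop (Suc j) ys"

definition matchperm :: "'x list \<Rightarrow> 'x list \<Rightarrow> nat \<Rightarrow> nat" where
  "matchperm xs ys p = (if p < length xs then (THE q. q < length ys \<and> ys ! q = xs ! p) else p)"

definition dioperad :: "('a::ab_group_add, 'k::field) dioperad \<Rightarrow> bool" where
  "dioperad P \<longleftrightarrow>
    \<comment> \<open>each P(m,n) is a k-vector space (subspace of the ambient group)\<close>
    (\<forall>m n. 0 \<in> dcar P m n) \<and>
    (\<forall>m n a b. a \<in> dcar P m n \<longrightarrow> b \<in> dcar P m n \<longrightarrow> a + b \<in> dcar P m n) \<and>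
    (\<forall>m n c a. a \<in> dcar P m n \<longrightarrow> dsmult P c a \<in> dcar P m n) \<and>
    (\<forall>m n c a b. a \<in> dcar P m n \<longrightarrow> b \<in> dcar P m n \<longrightarrow>
        dsmult P c (a + b) = dsmult P c a + dsmult P c b) \<and>
    (\<forall>m n c c' a. a \<in> dcar P m n \<longrightarrow> dsmult P (c + c') a = dsmult P c a + dsmult P c' a) \<and>
    (\<forall>m n c c' a. a \<in> dcar P m n \<longrightarrow> dsmult P (c * c') a = dsmult P c (dsmult P c' a)) \<and>
    (\<forall>m n a. a \<in> dcar P m n \<longrightarrow> dsmult P 1 a = a) \<and>
    \<comment> \<open>actions: right S_m on inputs, left S_n on outputs, linear, commuting\<close>
    (\<forall>m n a \<sigma>. a \<in> dcar P m n \<longrightarrow> \<sigma> permutes {..<m} \<longrightarrow> dract P m n a \<sigma> \<in> dcar P m n) \<and>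
    (\<forall>m n a \<tau>. a \<in> dcar P m n \<longrightarrow> \<tau> permutes {..<n} \<longrightarrow> dlact P m n \<tau> a \<in> dcar P m n) \<and>
    (\<forall>m n a. a \<in> dcar P m n \<longrightarrow> dract P m n a id = a) \<and>
    (\<forall>m n a. a \<in> dcar P m n \<longrightarrow> dlact P m n id a = a) \<and>
    (\<forall>m n a \<sigma> \<sigma>'. a \<in> dcar P m n \<longrightarrow> \<sigma> permutes {..<m} \<longrightarrow> \<sigma>' permutes {..<m} \<longrightarrow>
        dract P m n (dract P m n a \<sigma>) \<sigma>' = dract P m n a (\<sigma> \<circ> \<sigma>')) \<and>
    (\<forall>m n a \<tau> \<tau>'. a \<in> dcar P m n \<longrightarrow> \<tau> permutes {..<n} \<longrightarrow> \<tau>' permutes {..<n} \<longrightarrow>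
        dlact P m n \<tau> (dlact P m n \<tau>' a) = dlact P m n (\<tau> \<circ> \<tau>') a) \<and>
    (\<forall>m n a \<sigma> \<tau>. a \<in> dcar P m n \<longrightarrow> \<sigma> permutes {..<m} \<longrightarrow> \<tau> permutes {..<n} \<longrightarrow>
        dlact P m n \<tau> (dract P m n a \<sigma>) = dract P m n (dlact P m n \<tau> a) \<sigma>) \<and>
    (\<forall>m n a b \<sigma>. a \<in> dcar P m n \<longrightarrow> b \<in> dcar P m n \<longrightarrow> \<sigma> permutes {..<m} \<longrightarrow>
        dract P m n (a + b) \<sigma> = dract P m n a \<sigma> + dract P m n b \<sigma>) \<and>
    (\<forall>m n c a \<sigma>. a \<in> dcar P m n \<longrightarrow> \<sigma> permutes {..<m} \<longrightarrow>
        dract P m n (dsmult P c a) \<sigma> = dsmult P c (dract P m n a \<sigma>)) \<and>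
    (\<forall>m n a b \<tau>. a \<in> dcar P m n \<longrightarrow> b \<in> dcar P m n \<longrightarrow> \<tau> permutes {..<n} \<longrightarrow>
        dlact P m n \<tau> (a + b) = dlact P m n \<tau> a + dlact P m n \<tau> b) \<and>
    (\<forall>m n c a \<tau>. a \<in> dcar P m n \<longrightarrow> \<tau> permutes {..<n} \<longrightarrow>
        dlact P m n \<tau> (dsmult P c a) = dsmult P c (dlact P m n \<tau> a)) \<and>
    \<comment> \<open>compositions: typed and bilinear\<close>
    (\<forall>m n m' n' i j a b. a \<in> dcar P m n \<longrightarrow> b \<in> dcar P m' n' \<longrightarrow> i < n \<longrightarrow> j < m' \<longrightarrow>
        dcomp P (m, n) (m', n') i j a b \<in> dcar P (m + m' - 1) (n + n' - 1)) \<and>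
    (\<forall>m n m' n' i j a a' b. a \<in> dcar P m n \<longrightarrow> a' \<in> dcar P m n \<longrightarrow> b \<in> dcar P m' n' \<longrightarrow>
        i < n \<longrightarrow> j < m' \<longrightarrow>
        dcomp P (m, n) (m', n') i j (a + a') b = dcomp P (m, n) (m', n') i j a b + dcomp P (m, n) (m', n') i j a' b) \<and>
    (\<forall>m n m' n' i j a b b'. a \<in> dcar P m n \<longrightarrow> b \<in> dcar P m' n' \<longrightarrow> b' \<in> dcar P m' n' \<longrightarrow>
        i < n \<longrightarrow> j < m' \<longrightarrow>
        dcomp P (m, n) (m', n') i j a (b + b') = dcomp P (m, n) (m', n') i j a b + dcomp P (m, n) (m', n') i j a b') \<and>
    (\<forall>m n m' n' i j c a b. a \<in> dcar P m n \<longrightarrow> b \<in> dcar P m' n' \<longrightarrow> i < n \<longrightarrow> j < m' \<longrightarrow>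
        dcomp P (m, n) (m', n') i j (dsmult P c a) b = dsmult P c (dcomp P (m, n) (m', n') i j a b) \<and>
        dcomp P (m, n) (m', n') i j a (dsmult P c b) = dsmult P c (dcomp P (m, n) (m', n') i j a b)) \<and>
    \<comment> \<open>equivariance of the compositions\<close>
    (\<forall>m n m' n' i j a b \<sigma>a \<tau>a \<sigma>b \<tau>b.
        a \<in> dcar P m n \<longrightarrow> b \<in> dcar P m' n' \<longrightarrow> i < n \<longrightarrow> j < m' \<longrightarrow>
        \<sigma>a permutes {..<m} \<longrightarrow> \<tau>a permutes {..<n} \<longrightarrow> \<sigma>b permutes {..<m'} \<longrightarrow> \<tau>b permutes {..<n'} \<longrightarrow>
        dcomp P (m, n) (m', n') i j (dlact P m n \<tau>a (dract P m n a \<sigma>a)) (dlact P m' n' \<tau>b (dract P m' n' b \<sigma>b))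
        = dlact P (m + m' - 1) (n + n' - 1)
            (matchperm (ins_at (lab 0 n) (inv \<tau>a i) (lab 1 n'))
                       (ins_at (relab 0 (inv \<tau>a) n) i (relab 1 (inv \<tau>b) n')))
            (dract P (m + m' - 1) (n + n' - 1)
               (dcomp P (m, n) (m', n') (inv \<tau>a i) (\<sigma>b j) a b)
               (matchperm (ins_at (relab 1 \<sigma>b m') j (relab 0 \<sigma>a m))
                          (ins_at (lab 1 m') (\<sigma>b j) (lab 0 m))))) \<and>
    \<comment> \<open>associativity: sequential composition a -> b -> c\<close>
    (\<forall>m n m1 n1 m2 n2 i j k l a b c.
        a \<in> dcar P m n \<longrightarrow> b \<in> dcar P m1 n1 \<longrightarrow> c \<in> dcar P m2 n2 \<longrightarrow>
        i < n \<longrightarrow> j < m1 \<longrightarrow> k < n1 \<longrightarrow> l < m2 \<longrightarrow>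
        dcomp P (m + m1 - 1, n + n1 - 1) (m2, n2) (i + k) l (dcomp P (m, n) (m1, n1) i j a b) c
        = dcomp P (m, n) (m1 + m2 - 1, n1 + n2 - 1) i (l + j) a (dcomp P (m1, n1) (m2, n2) k l b c)) \<and>
    \<comment> \<open>associativity: two outputs i < i' of a plugged into b and c\<close>
    (\<forall>m n m1 n1 m2 n2 i i' j l a b c.
        a \<in> dcar P m n \<longrightarrow> b \<in> dcar P m1 n1 \<longrightarrow> c \<in> dcar P m2 n2 \<longrightarrow>
        i < i' \<longrightarrow> i' < n \<longrightarrow> j < m1 \<longrightarrow> l < m2 \<longrightarrow>
        dcomp P (m + m1 - 1, n + n1 - 1) (m2, n2) (i' + n1 - 1) l (dcomp P (m, n) (m1, n1) i j a b) c
        = dract P (m + m2 - 1 + m1 - 1) (n + n2 - 1 + n1 - 1)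
            (dcomp P (m + m2 - 1, n + n2 - 1) (m1, n1) i j (dcomp P (m, n) (m2, n2) i' l a c) b)
            (matchperm (ins_at (lab 2 m2) l (ins_at (lab 1 m1) j (lab 0 m)))
                       (ins_at (lab 1 m1) j (ins_at (lab 2 m2) l (lab 0 m))))) \<and>
    \<comment> \<open>associativity: outputs of b and c plugged into two inputs j < j' of a\<close>
    (\<forall>m n m1 n1 m2 n2 j j' k k' a b c.
        a \<in> dcar P m n \<longrightarrow> b \<in> dcar P m1 n1 \<longrightarrow> c \<in> dcar P m2 n2 \<longrightarrow>
        j < j' \<longrightarrow> j' < m \<longrightarrow> k < n1 \<longrightarrow> k' < n2 \<longrightarrow>
        dcomp P (m2, n2) (m + m1 - 1, n + n1 - 1) k' (j' + m1 - 1) c (dcomp P (m1, n1) (m, n) k j b a)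
        = dlact P (m + m2 - 1 + m1 - 1) (n + n2 - 1 + n1 - 1)
            (matchperm (ins_at (lab 1 n1) k (ins_at (lab 2 n2) k' (lab 0 n)))
                       (ins_at (lab 2 n2) k' (ins_at (lab 1 n1) k (lab 0 n))))
            (dcomp P (m1, n1) (m + m2 - 1, n + n2 - 1) k j b (dcomp P (m2, n2) (m, n) k' j' c a)))"

definition dioperad_hom ::
  "('a::ab_group_add, 'k::field) dioperad \<Rightarrow> ('b::ab_group_add, 'k) dioperad
     \<Rightarrow> (nat \<Rightarrow> nat \<Rightarrow> 'a \<Rightarrow> 'b) \<Rightarrow> bool" where
  "dioperad_hom P Q \<phi> \<longleftrightarrow>
    (\<forall>m n a. a \<in> dcar P m n \<longrightarrow> \<phi> m n a \<in> dcar Q m n) \<and>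
    (\<forall>m n a b. a \<in> dcar P m n \<longrightarrow> b \<in> dcar P m n \<longrightarrow> \<phi> m n (a + b) = \<phi> m n a + \<phi> m n b) \<and>
    (\<forall>m n c a. a \<in> dcar P m n \<longrightarrow> \<phi> m n (dsmult P c a) = dsmult Q c (\<phi> m n a)) \<and>
    (\<forall>m n a \<sigma>. a \<in> dcar P m n \<longrightarrow> \<sigma> permutes {..<m} \<longrightarrow>
        \<phi> m n (dract P m n a \<sigma>) = dract Q m n (\<phi> m n a) \<sigma>) \<and>
    (\<forall>m n a \<tau>. a \<in> dcar P m n \<longrightarrow> \<tau> permutes {..<n} \<longrightarrow>
        \<phi> m n (dlact P m n \<tau> a) = dlact Q m n \<tau> (\<phi> m n a)) \<and>
    (\<forall>m n m' n' i j a b. a \<in> dcar P m n \<longrightarrow> b \<in> dcar P m' n' \<longrightarrow> i < n \<longrightarrow> j < m' \<longrightarrow>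
        \<phi> (m + m' - 1) (n + n' - 1) (dcomp P (m, n) (m', n') i j a b)
        = dcomp Q (m, n) (m', n') i j (\<phi> m n a) (\<phi> m' n' b))"

text \<open>
  V = k^d with standard basis e_0..e_(d-1).  An element f of Hom(V^m, V^n) is
  stored by its matrix coefficients: f o x = coefficient of
  e_(o!0) (x) ... (x) e_(o!(n-1)) in f(e_(x!0) (x) ... (x) e_(x!(m-1))),
  and f vanishes on index lists of the wrong shape.
\<close>

type_synonym 'k tensor = "nat list \<Rightarrow> nat list \<Rightarrow> 'k"

definition idx :: "nat \<Rightarrow> nat \<Rightarrow> nat list set" where
  "idx d k = {xs. length xs = k \<and> set xs \<subseteq> {..<d}}"

definition EndV :: "nat \<Rightarrow> ('k::field tensor, 'k) dioperad" where
  "EndV d = \<lparr>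
     dcar = (\<lambda>m n. {f. \<forall>ou x. f ou x \<noteq> 0 \<longrightarrow> ou \<in> idx d n \<and> x \<in> idx d m}),
     dsmult = (\<lambda>c f. \<lambda>ou x. c * f ou x),
     dract = (\<lambda>m n f \<sigma>. \<lambda>ou x. if length x = m then f ou (map (\<lambda>k. x ! inv \<sigma> k) [0..<m]) else 0),
     dlact = (\<lambda>m n \<tau> f. \<lambda>ou x. if length ou = n then f (map (\<lambda>p. ou ! \<tau> p) [0..<n]) x else 0),
     dcomp = (\<lambda>(m, n) (m', n') i j f g. \<lambda>ou x.
        if length ou = n + n' - 1 \<and> length x = m + m' - 1 then
          (\<Sum>k<d. f (take i ou @ [k] @ drop (i + n') ou) (take m (drop j x))
                 * g (take n' (drop i ou)) (take j x @ [k] @ drop (j + m) x))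
        else 0) \<rparr>"

datatype color = Straight | Dotted

text \<open>
  Component ccar O c a b = operations with output colour c, a straight inputs
  followed by b dotted inputs; S_a x S_b acts on the right.  The composition
  ccomp O c (a,b) j c' (a',b') f g plugs the output (of colour c') of g into the
  j-th input of colour c' of f.  Inputs of the result: for c' = Straight, straight
  inputs (straight of f before j) @ (straight of g) @ (straight of f after j) and
  dotted inputs (dotted of f) @ (dotted of g); symmetrically for c' = Dotted.
\<close>

record ('a, 'k) col2_operad =
  ccar   :: "color \<Rightarrow> nat \<Rightarrow> nat \<Rightarrow> 'a set"
  csmult :: "'k \<Rightarrow> 'a \<Rightarrow> 'a"
  cact   :: "color \<Rightarrow> nat \<Rightarrow> nat \<Rightarrow> 'a \<Rightarrow> (nat \<Rightarrow> nat) \<Rightarrow> (nat \<Rightarrow> nat) \<Rightarrow> 'a"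
  ccomp  :: "color \<Rightarrow> nat \<times> nat \<Rightarrow> nat \<Rightarrow> color \<Rightarrow> nat \<times> nat \<Rightarrow> 'a \<Rightarrow> 'a \<Rightarrow> 'a"

definition resprof :: "color \<Rightarrow> nat \<times> nat \<Rightarrow> nat \<times> nat \<Rightarrow> nat \<times> nat" where
  "resprof c' p p' = (case c' of
      Straight \<Rightarrow> (fst p + fst p' - 1, snd p + snd p')
    | Dotted \<Rightarrow> (fst p + fst p', snd p + snd p' - 1))"

definition col2_hom ::
  "('a::ab_group_add, 'k) col2_operad \<Rightarrow> ('b::ab_group_add, 'k) col2_operad
     \<Rightarrow> (color \<Rightarrow> nat \<Rightarrow> nat \<Rightarrow> 'a \<Rightarrow> 'b) \<Rightarrow> bool" where
  "col2_hom Op Q \<phi> \<longleftrightarrow>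
    (\<forall>c a b x. x \<in> ccar Op c a b \<longrightarrow> \<phi> c a b x \<in> ccar Q c a b) \<and>
    (\<forall>c a b x y. x \<in> ccar Op c a b \<longrightarrow> y \<in> ccar Op c a b \<longrightarrow> \<phi> c a b (x + y) = \<phi> c a b x + \<phi> c a b y) \<and>
    (\<forall>c a b k x. x \<in> ccar Op c a b \<longrightarrow> \<phi> c a b (csmult Op k x) = csmult Q k (\<phi> c a b x)) \<and>
    (\<forall>c a b x \<sigma> \<tau>. x \<in> ccar Op c a b \<longrightarrow> \<sigma> permutes {..<a} \<longrightarrow> \<tau> permutes {..<b} \<longrightarrow>
        \<phi> c a b (cact Op c a b x \<sigma> \<tau>) = cact Q c a b (\<phi> c a b x) \<sigma> \<tau>) \<and>
    (\<forall>c a b c' a' b' j f g. f \<in> ccar Op c a b \<longrightarrow> g \<in> ccar Op c' a' b' \<longrightarrow>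
        j < (case c' of Straight \<Rightarrow> a | Dotted \<Rightarrow> b) \<longrightarrow>
        \<phi> c (fst (resprof c' (a, b) (a', b'))) (snd (resprof c' (a, b) (a', b')))
          (ccomp Op c (a, b) j c' (a', b') f g)
        = ccomp Q c (a, b) j c' (a', b') (\<phi> c a b f) (\<phi> c' a' b' g))"

text \<open>
  Psi^|(a,b) = P(a,b+1): root = output 0, straight inputs = inputs 0..a-1,
  dotted inputs = outputs 1..b.  Psi^dot(a,b) = P(a+1,b): root = input 0,
  straight inputs = inputs 1..a, dotted inputs = outputs 0..b-1.
\<close>

definition Pprof :: "color \<Rightarrow> nat \<times> nat \<Rightarrow> nat \<times> nat" where
  "Pprof c p = (case c of Straight \<Rightarrow> (fst p, Suc (snd p)) | Dotted \<Rightarrow> (Suc (fst p), snd p))"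

definition shiftp :: "(nat \<Rightarrow> nat) \<Rightarrow> nat \<Rightarrow> nat" where
  "shiftp \<sigma> k = (if k = 0 then 0 else Suc (\<sigma> (k - 1)))"

definition Psi :: "('a, 'k) dioperad \<Rightarrow> ('a, 'k) col2_operad" where
  "Psi P = \<lparr>
     ccar = (\<lambda>c a b. case c of Straight \<Rightarrow> dcar P a (Suc b) | Dotted \<Rightarrow> dcar P (Suc a) b),
     csmult = dsmult P,
     cact = (\<lambda>c a b x \<sigma> \<tau>. case c of
         Straight \<Rightarrow> dlact P a (Suc b) (inv (shiftp \<tau>)) (dract P a (Suc b) x \<sigma>)
       | Dotted \<Rightarrow> dlact P (Suc a) b (inv \<tau>) (dract P (Suc a) b x (shiftp \<sigma>))),
     ccomp = (\<lambda>c p j c' p' f g. case c' of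
         Straight \<Rightarrow> dcomp P (Pprof c' p') (Pprof c p) 0
                        (case c of Straight \<Rightarrow> j | Dotted \<Rightarrow> Suc j) g f
       | Dotted \<Rightarrow> dcomp P (Pprof c p) (Pprof c' p')
                        (case c of Straight \<Rightarrow> Suc j | Dotted \<Rightarrow> j) 0 f g) \<rparr>"

text \<open>
  V* = k^d with the dual basis.  An operation g with output colour c, a straight
  and b dotted inputs is stored by coefficients g r x y: r the (dual) basis index of
  the output, x the basis indices of the straight inputs, y the dual basis indices
  of the dotted inputs.
\<close>

type_synonym 'k ctensor = "nat \<Rightarrow> nat list \<Rightarrow> nat list \<Rightarrow> 'k"

definition EndVV :: "nat \<Rightarrow> ('k::field ctensor, 'k) col2_operad" where
  "EndVV d = \<lparr>
     ccar = (\<lambda>c a b. {g. \<forall>r x y. g r x y \<noteq> 0 \<longrightarrow> r < d \<and> x \<in> idx d a \<and> y \<in> idx d b}),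
     csmult = (\<lambda>k g. \<lambda>r x y. k * g r x y),
     cact = (\<lambda>c a b g \<sigma> \<tau>. \<lambda>r x y.
        if length x = a \<and> length y = b
        then g r (map (\<lambda>k. x ! inv \<sigma> k) [0..<a]) (map (\<lambda>k. y ! inv \<tau> k) [0..<b]) else 0),
     ccomp = (\<lambda>c (a, b) j c' (a', b') f g. case c' of
         Straight \<Rightarrow> (\<lambda>r x y. if length x = a + a' - 1 \<and> length y = b + b' then
              (\<Sum>k<d. f r (take j x @ [k] @ drop (j + a') x) (take b y)
                     * g k (take a' (drop j x)) (drop b y)) else 0)
       | Dotted \<Rightarrow> (\<lambda>r x y. if length x = a + a' \<and> length y = b + b' - 1 then
              (\<Sum>k<d. f r (take a x) (take j y @ [k] @ drop (j + b') y)
                     * g k (drop a x) (take b' (drop j y))) else 0)) \<rparr>"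

text \<open>
  The canonical isomorphisms Hom(V^m,V^n) = Hom(V^m (x) V*^(n-1), V)
  = Hom(V^(m-1) (x) V*^n, V*) in coordinates: for f = rho(gamma),
  rhobar(Psi^|(gamma)) r x y = f (r # y) x and
  rhobar(Psi^dot(gamma)) s x y = f y (s # x).
\<close>

definition rhobar :: "(nat \<Rightarrow> nat \<Rightarrow> 'a \<Rightarrow> 'k tensor) \<Rightarrow> color \<Rightarrow> nat \<Rightarrow> nat \<Rightarrow> 'a \<Rightarrow> 'k ctensor" where
  "rhobar \<rho> c a b \<gamma> = (case c of
      Straight \<Rightarrow> (\<lambda>r x y. \<rho> a (Suc b) \<gamma> (r # y) x)
    | Dotted \<Rightarrow> (\<lambda>s x y. \<rho> (Suc a) b \<gamma> y (s # x)))"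

end

theory Submission
  imports Defs
begin

text \<open>
  A dioperad morphism \<rho> : P \<rightarrow> End_V induces, colour by colour, a morphism
  \<Psi>(\<rho>) : \<Psi>(P) \<rightarrow> \<Psi>(End_V), because the operations of \<Psi>(P) are just
  relabelled actions and compositions of P.  The representation \<rho>bar is this
  morphism followed by the canonical isomorphisms (moving the root output of a
  tensor to an output of colour V, or the root input to an output of colour V*),
  and these isomorphisms form a morphism \<Psi>(End_V) \<rightarrow> End_(V,V*): contracting
  a plugged index of a tensor does not depend on which leg was chosen as root.
\<close>

lemma shiftp_comp: "shiftp f \<circ> shiftp g = shiftp (f \<circ> g)"
  by (rule ext) (simp add: shiftp_def)

lemma shiftp_id: "shiftp id = id"
  by (rule ext) (simp add: shiftp_def)

lemma
  assumes "\<tau> permutes {..<n}"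
  shows permutes_shiftp: "shiftp \<tau> permutes {..<Suc n}"
    and inv_shiftp: "inv (shiftp \<tau>) = shiftp (inv \<tau>)"
proof -
  have inverse: "shiftp (inv \<tau>) \<circ> shiftp \<tau> = id" "shiftp \<tau> \<circ> shiftp (inv \<tau>) = id"
    using permutes_inv_o[OF assms] by (simp_all add: shiftp_comp shiftp_id)
  then have "bij (shiftp \<tau>)"
    using o_bij by blast
  moreover have "\<forall>k. k \<notin> {..<Suc n} \<longrightarrow> shiftp \<tau> k = k"
    using assms by (auto simp: shiftp_def permutes_def)
  ultimately show "shiftp \<tau> permutes {..<Suc n}"
    unfolding permutes_def by (metis bij_pointE)
  show "inv (shiftp \<tau>) = shiftp (inv \<tau>)"
    using inverse inv_unique_comp by blast
qed

lemma map_nth_Cons_shiftp: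
  "length ys = n \<Longrightarrow>
    map (\<lambda>p. (y # ys) ! shiftp \<tau> p) [0..<Suc n] = y # map (\<lambda>k. ys ! \<tau> k) [0..<n]"
  by (simp add: shiftp_def map_upt_Suc del: upt_Suc)

lemma dioperad_dract_closed:
  "dioperad P \<Longrightarrow> a \<in> dcar P m n \<Longrightarrow> \<sigma> permutes {..<m} \<Longrightarrow> dract P m n a \<sigma> \<in> dcar P m n"
  unfolding dioperad_def by (elim conjE) simp

lemma
  assumes "dioperad_hom P Q \<phi>"
  shows dioperad_hom_dcar: "a \<in> dcar P m n \<Longrightarrow> \<phi> m n a \<in> dcar Q m n"
    and dioperad_hom_add:
      "a \<in> dcar P m n \<Longrightarrow> b \<in> dcar P m n \<Longrightarrow> \<phi> m n (a + b) = \<phi> m n a + \<phi> m n b"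
    and dioperad_hom_dsmult:
      "a \<in> dcar P m n \<Longrightarrow> \<phi> m n (dsmult P c a) = dsmult Q c (\<phi> m n a)"
    and dioperad_hom_dract:
      "a \<in> dcar P m n \<Longrightarrow> \<sigma> permutes {..<m} \<Longrightarrow>
        \<phi> m n (dract P m n a \<sigma>) = dract Q m n (\<phi> m n a) \<sigma>"
    and dioperad_hom_dlact:
      "a \<in> dcar P m n \<Longrightarrow> \<tau> permutes {..<n} \<Longrightarrow>
        \<phi> m n (dlact P m n \<tau> a) = dlact Q m n \<tau> (\<phi> m n a)"
    and dioperad_hom_dcomp:
      \<comment> \<open>arity of the composite given as k, l so that simp can match differently written arities\<close>
      "a \<in> dcar P m n \<Longrightarrow> b \<in> dcar P m' n' \<Longrightarrow> i < n \<Longrightarrow> j < m' \<Longrightarrow>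
        k = m + m' - 1 \<Longrightarrow> l = n + n' - 1 \<Longrightarrow>
        \<phi> k l (dcomp P (m, n) (m', n') i j a b) = dcomp Q (m, n) (m', n') i j (\<phi> m n a) (\<phi> m' n' b)"
  using assms by (simp_all add: dioperad_hom_def)

lemma col2_hom_comp:
  assumes "col2_hom Op Q \<phi>" and "col2_hom Q R \<psi>"
  shows "col2_hom Op R (\<lambda>c a b. \<psi> c a b \<circ> \<phi> c a b)"
  using assms unfolding col2_hom_def by simp

definition Psi_hom :: "(nat \<Rightarrow> nat \<Rightarrow> 'a \<Rightarrow> 'b) \<Rightarrow> color \<Rightarrow> nat \<Rightarrow> nat \<Rightarrow> 'a \<Rightarrow> 'b" where
  "Psi_hom \<phi> c a b = case_prod \<phi> (Pprof c (a, b))"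

lemma Psi_hom_cact:
  assumes "dioperad P" and "dioperad_hom P Q \<phi>" and "x \<in> ccar (Psi P) c a b"
    and \<sigma>: "\<sigma> permutes {..<a}" and \<tau>: "\<tau> permutes {..<b}"
  shows "Psi_hom \<phi> c a b (cact (Psi P) c a b x \<sigma> \<tau>) = cact (Psi Q) c a b (Psi_hom \<phi> c a b x) \<sigma> \<tau>"
proof (cases c)
  case Straight
  have "inv (shiftp \<tau>) permutes {..<Suc b}"
    using permutes_inv[OF permutes_shiftp[OF \<tau>]] .
  with assms Straight show ?thesis
    by (simp add: Psi_def Psi_hom_def Pprof_def dioperad_hom_dlact dioperad_hom_dract
        dioperad_dract_closed)
next
  case Dotted
  have "shiftp \<sigma> permutes {..<Suc a}" "inv \<tau> permutes {..<b}"
    using permutes_shiftp[OF \<sigma>] permutes_inv[OF \<tau>] .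
  with assms Dotted show ?thesis
    by (simp add: Psi_def Psi_hom_def Pprof_def dioperad_hom_dlact dioperad_hom_dract
        dioperad_dract_closed)
qed

lemma Psi_hom_ccomp:
  assumes "dioperad_hom P Q \<phi>" and "f \<in> ccar (Psi P) c a b" and "g \<in> ccar (Psi P) c' a' b'"
    and "j < (case c' of Straight \<Rightarrow> a | Dotted \<Rightarrow> b)"
  shows "Psi_hom \<phi> c (fst (resprof c' (a, b) (a', b'))) (snd (resprof c' (a, b) (a', b')))
      (ccomp (Psi P) c (a, b) j c' (a', b') f g)
    = ccomp (Psi Q) c (a, b) j c' (a', b') (Psi_hom \<phi> c a b f) (Psi_hom \<phi> c' a' b' g)"
  using assms by (cases c; cases c')
    (simp_all add: Psi_def Psi_hom_def Pprof_def resprof_def dioperad_hom_dcomp)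

lemma col2_hom_Psi_hom:
  assumes "dioperad P" and "dioperad_hom P Q \<phi>"
  shows "col2_hom (Psi P) (Psi Q) (Psi_hom \<phi>)"
  unfolding col2_hom_def
proof (intro conjI allI impI)
  fix c a b x y k
  assume "x \<in> ccar (Psi P) c a b"
  then show "Psi_hom \<phi> c a b x \<in> ccar (Psi Q) c a b"
    and "Psi_hom \<phi> c a b (csmult (Psi P) k x) = csmult (Psi Q) k (Psi_hom \<phi> c a b x)"
    and "y \<in> ccar (Psi P) c a b \<Longrightarrow> Psi_hom \<phi> c a b (x + y) = Psi_hom \<phi> c a b x + Psi_hom \<phi> c a b y"
    using assms(2) by (cases c;
        simp add: Psi_def Psi_hom_def Pprof_def dioperad_hom_dcar dioperad_hom_dsmult dioperad_hom_add)+
qed (simp_all add: Psi_hom_cact[OF assms] Psi_hom_ccomp[OF assms(2)])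

definition reroot :: "color \<Rightarrow> 'k tensor \<Rightarrow> 'k ctensor" where
  "reroot c f = (case c of Straight \<Rightarrow> (\<lambda>r x y. f (r # y) x) | Dotted \<Rightarrow> (\<lambda>s x y. f y (s # x)))"

lemma rhobar_eq_reroot_Psi_hom: "rhobar \<rho> = (\<lambda>c a b. reroot c \<circ> Psi_hom \<rho> c a b)"
  by (simp add: rhobar_def reroot_def Psi_hom_def Pprof_def fun_eq_iff split: color.split)

lemma reroot_ccar:
  assumes "f \<in> ccar (Psi (EndV d)) c a b"
  shows "reroot c f \<in> ccar (EndVV d) c a b"
proof (cases c)
  case Straight
  have "r # y \<in> idx d (Suc b) \<and> x \<in> idx d a" if "f (r # y) x \<noteq> 0" for r x y
    using assms Straight that by (simp add: Psi_def EndV_def)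
  with Straight show ?thesis
    by (simp add: EndVV_def reroot_def idx_def)
next
  case Dotted
  have "y \<in> idx d b \<and> r # x \<in> idx d (Suc a)" if "f y (r # x) \<noteq> 0" for r x y
    using assms Dotted that by (simp add: Psi_def EndV_def)
  with Dotted show ?thesis
    by (simp add: EndVV_def reroot_def idx_def)
qed

lemma reroot_cact:
  assumes "\<sigma> permutes {..<a}" and "\<tau> permutes {..<b}"
  shows "reroot c (cact (Psi (EndV d)) c a b f \<sigma> \<tau>) = cact (EndVV d) c a b (reroot c f) \<sigma> \<tau>"
  using assms by (cases c)
    (auto simp: Psi_def EndV_def EndVV_def reroot_def inv_shiftp map_nth_Cons_shiftp fun_eq_iff
      simp del: upt_Suc)

\<comment> \<open>The bound on j rules out plugging with arity sums truncated at 0.\<close>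
lemma reroot_ccomp:
  assumes "j < (case c' of Straight \<Rightarrow> a | Dotted \<Rightarrow> b)"
  shows "reroot c (ccomp (Psi (EndV d)) c (a, b) j c' (a', b') f g)
    = ccomp (EndVV d) c (a, b) j c' (a', b') (reroot c f) (reroot c' g)"
  using assms by (cases c; cases c')
    (auto simp: Psi_def Pprof_def EndV_def EndVV_def reroot_def mult.commute fun_eq_iff)

lemma col2_hom_reroot: "col2_hom (Psi (EndV d)) (EndVV d) (\<lambda>c a b. reroot c)"
  unfolding col2_hom_def
  by (auto simp: reroot_ccar reroot_cact reroot_ccomp)
    (auto simp: reroot_def Psi_def EndV_def EndVV_def plus_fun_def split: color.split)

theorem proposition2p2:
  fixes P :: "('a::ab_group_add, 'k::field) dioperad"
    and d :: nat
    and \<rho> :: "nat \<Rightarrow> nat \<Rightarrow> 'a \<Rightarrow> 'k tensor"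
  assumes "dioperad P"
    and "dioperad_hom P (EndV d) \<rho>"
  shows "col2_hom (Psi P) (EndVV d) (rhobar \<rho>)"
proof -
  have "col2_hom (Psi P) (Psi (EndV d)) (Psi_hom \<rho>)"
    using assms by (rule col2_hom_Psi_hom)
  then have "col2_hom (Psi P) (EndVV d) (\<lambda>c a b. reroot c \<circ> Psi_hom \<rho> c a b)"
    using col2_hom_reroot by (rule col2_hom_comp)
  then show ?thesis
    by (simp add: rhobar_eq_reroot_Psi_hom)
qed

end
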